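(* In the calculus $\lambda^{RE}$ described in the context: if $e_1\Rrightarrow e_2$, then there exists $e_1'$ such that $e_1\to^*e_1'$ and $e_1'\cong e_2$.
   Context: Syntax of $\lambda^{RE}$. Basic types $b ::= \mathsf{Bool}\mid\mathsf{Unit}$. Constants $c ::= \mathsf{true}\mid\mathsf{false}\mid\mathsf{unit}\mid (=_b)\mid (=_{(c,b)})$. Expressions $e ::= c\mid x\mid e\ e\mid \lambda x{:}\tau.\,e\mid \mathsf{BEq}_b\ e\ e\ e\mid \mathsf{XEq}_{x:\tau\to\tau}\ e\ e\ e$. Values $v ::= c\mid \lambda x{:}\tau.\,e\mid \mathsf{BEq}_b\ e\ e\ v\mid \mathsf{XEq}_{x:\tau\to\tau}\ e\ e\ v$. Types $\tau ::= \{x{:}b\mid e\}\mid x{:}\tau\to\tau\mid \mathsf{PEq}_{\tau}\{e\}\{e\}$. $e[x:=e']$ is capture-avoiding substitution. Reduction: evaluation contexts $E ::= \bullet\mid E\ e\mid v\ E\mid \mathsf{BEq}_b\ e\ e\ E\mid\mathsf{XEq}_{x:\tau\to\tau}\ e\ e\ E$; $E[e]\to E[e']$ if $e\to e'$; $(\lambda x{:}\tau.\,e)\ v\to e[x:=v]$; $(=_b)\ c_1\to(=_{(c_1,b)})$; $(=_{(c_1,b)})\ c_2\to\mathsf{true}$ if $c_1,c_2$ syntactically equal, else $\to\mathsf{false}$. $\to^*$ is the reflexive–transitive closure. Parallel reduction $e\Rrightarrow e'$ and $\tau\Rrightarrow\tau'$ is defined inductively: $x\Rrightarrow x$; $c\Rrightarrow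 c$; $\lambda x{:}\tau.e\Rrightarrow\lambda x{:}\tau'.e'$ if $\tau\Rrightarrow\tau'$, $e\Rrightarrow e'$; $e_1\ e_2\Rrightarrow e_1'\ e_2'$ if $e_i\Rrightarrow e_i'$; $(\lambda x{:}\tau.e)\ v\Rrightarrow e'[x:=v']$ if $e\Rrightarrow e'$ and $v\Rrightarrow v'$; $(=_b)\ c_1\Rrightarrow(=_{(c_1,b)})$; $(=_{(c_1,b)})\ c_2\Rrightarrow d$ where $d=\mathsf{true}$ if $c_1,c_2$ are syntactically equal and $\mathsf{false}$ otherwise; $\mathsf{BEq}_b\ e_l\ e_r\ e\Rrightarrow\mathsf{BEq}_b\ e_l'\ e_r'\ e'$ if $e_l\Rrightarrow e_l'$, $e_r\Rrightarrow e_r'$, $e\Rrightarrow e'$; $\mathsf{XEq}_{x:\tau_x\to\tau}\ e_l\ e_r\ e\Rrightarrow\mathsf{XEq}_{x:\tau_x'\to\tau'}\ e_l'\ e_r'\ e'$ if all five components parallel reduce; on types: $\{x{:}b\mid r\}\Rrightarrow\{x{:}b\mid r'\}$ if $r\Rrightarrow r'$; $x{:}\tau_x\to\tau\Rrightarrow x{:}\tau_x'\to\tau'$ if $\tau_x\Rrightarrow\tau_x'$, $\tau\Rrightarrow\tau'$; $\mathsf{PEq}_\tau\{e_l\}\{e_r\}\Rrightarrow\mathsf{PEq}_{\tau'}\{e_l'\}\{e_r'\}$ if all components parallel reduce. Congruence $e\cong e'$ (same outermost constructor, subparts related by parallel reduction): $x\cong x$; $c\cong c$; $\lambda x{:}\tau.e\cong\lambda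 x{:}\tau'.e'$ if $\tau\Rrightarrow\tau'$, $e\Rrightarrow e'$; $e_1\ e_2\cong e_1'\ e_2'$ if $e_1\Rrightarrow e_1'$, $e_2\Rrightarrow e_2'$; $\mathsf{BEq}_b\ e_l\ e_r\ e\cong\mathsf{BEq}_b\ e_l'\ e_r'\ e'$ if $e_l\Rrightarrow e_l'$, $e_r\Rrightarrow e_r'$, $e\Rrightarrow e'$; $\mathsf{XEq}_{x:\tau_x\to\tau}\ e_l\ e_r\ e\cong\mathsf{XEq}_{x:\tau_x'\to\tau'}\ e_l'\ e_r'\ e'$ if all five components parallel reduce. *)

theory Defs
  imports Main
begin

(* Syntax of lambda^RE, using de Bruijn indices for variables. *)
datatype basic = TBool | TUnit

datatype const = CTrue | CFalse | CUnit
  | CEq basic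
  | CEq2 const basic

datatype expr =
    Const const
  | Var nat
  | App expr expr
  | Lam ty expr
  | BEq basic expr expr expr
  | XEq ty ty expr expr expr            (* XEq_{x:\<tau>x \<rightarrow> \<tau>} el er e, binds x in \<tau> *)
and ty =
    TRefn basic expr                    (* {x:b | e}, binds x in e *)
  | TFun ty ty                          (* x:\<tau>x \<rightarrow> \<tau>, binds x in \<tau> *)
  | TPEq ty expr expr

primrec lift_e :: "nat \<Rightarrow> expr \<Rightarrow> expr" and lift_t :: "nat \<Rightarrow> ty \<Rightarrow> ty" where
  "lift_e k (Const c) = Const c"
| "lift_e k (Var i) = Var (if i < k then i else Suc i)"
| "lift_e k (App e1 e2) = App (lift_e k e1) (lift_e k e2)"
| "lift_e k (Lam t e) = Lam (lift_t k t) (lift_e (Suc k) e)"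
| "lift_e k (BEq b l r e) = BEq b (lift_e k l) (lift_e k r) (lift_e k e)"
| "lift_e k (XEq tx t l r e) =
     XEq (lift_t k tx) (lift_t (Suc k) t) (lift_e k l) (lift_e k r) (lift_e k e)"
| "lift_t k (TRefn b r) = TRefn b (lift_e (Suc k) r)"
| "lift_t k (TFun tx t) = TFun (lift_t k tx) (lift_t (Suc k) t)"
| "lift_t k (TPEq t l r) = TPEq (lift_t k t) (lift_e k l) (lift_e k r)"

primrec subst_e :: "nat \<Rightarrow> expr \<Rightarrow> expr \<Rightarrow> expr"
  and subst_t :: "nat \<Rightarrow> expr \<Rightarrow> ty \<Rightarrow> ty" where
  "subst_e k v (Const c) = Const c"
| "subst_e k v (Var i) = (if i < k then Var i else if i = k then v else Var (i - 1))"
| "subst_e k v (App e1 e2) = App (subst_e k v e1) (subst_e k v e2)"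
| "subst_e k v (Lam t e) = Lam (subst_t k v t) (subst_e (Suc k) (lift_e 0 v) e)"
| "subst_e k v (BEq b l r e) = BEq b (subst_e k v l) (subst_e k v r) (subst_e k v e)"
| "subst_e k v (XEq tx t l r e) =
     XEq (subst_t k v tx) (subst_t (Suc k) (lift_e 0 v) t)
         (subst_e k v l) (subst_e k v r) (subst_e k v e)"
| "subst_t k v (TRefn b r) = TRefn b (subst_e (Suc k) (lift_e 0 v) r)"
| "subst_t k v (TFun tx t) = TFun (subst_t k v tx) (subst_t (Suc k) (lift_e 0 v) t)"
| "subst_t k v (TPEq t l r) = TPEq (subst_t k v t) (subst_e k v l) (subst_e k v r)"

abbreviation subst0 :: "expr \<Rightarrow> expr \<Rightarrow> expr" where
  "subst0 e v \<equiv> subst_e 0 v e"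

fun is_value :: "expr \<Rightarrow> bool" where
  "is_value (Const c) = True"
| "is_value (Lam t e) = True"
| "is_value (BEq b l r v) = is_value v"
| "is_value (XEq tx t l r v) = is_value v"
| "is_value _ = False"

(* one-step reduction; the evaluation-context rule E[e] \<rightarrow> E[e'] is unfolded
   into one congruence rule per context former *)
inductive step :: "expr \<Rightarrow> expr \<Rightarrow> bool" (infix "\<longmapsto>" 50) where
  ctx_app1: "e1 \<longmapsto> e1' \<Longrightarrow> App e1 e2 \<longmapsto> App e1' e2"
| ctx_app2: "is_value v \<Longrightarrow> e2 \<longmapsto> e2' \<Longrightarrow> App v e2 \<longmapsto> App v e2'"
| ctx_beq: "e \<longmapsto> e' \<Longrightarrow> BEq b l r e \<longmapsto> BEq b l r e'"
| ctx_xeq: "e \<longmapsto> e' \<Longrightarrow> XEq tx t l r e \<longmapsto> XEq tx t l r e'"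
| beta: "is_value v \<Longrightarrow> App (Lam t e) v \<longmapsto> subst0 e v"
| eq1: "App (Const (CEq b)) (Const c1) \<longmapsto> Const (CEq2 c1 b)"
| eq2: "App (Const (CEq2 c1 b)) (Const c2) \<longmapsto> Const (if c1 = c2 then CTrue else CFalse)"

abbreviation steps :: "expr \<Rightarrow> expr \<Rightarrow> bool" (infix "\<longmapsto>\<^sup>*" 50) where
  "steps \<equiv> step\<^sup>*\<^sup>*"

inductive par_e :: "expr \<Rightarrow> expr \<Rightarrow> bool" (infix "\<Rrightarrow>" 50)
  and par_t :: "ty \<Rightarrow> ty \<Rightarrow> bool" (infix "\<Rrightarrow>\<^sub>t" 50) where
  pvar: "Var x \<Rrightarrow> Var x"
| pconst: "Const c \<Rrightarrow> Const c"
| plam: "t \<Rrightarrow>\<^sub>t t' \<Longrightarrow> e \<Rrightarrow> e' \<Longrightarrow> Lam t e \<Rrightarrow> Lam t' e'"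
| papp: "e1 \<Rrightarrow> e1' \<Longrightarrow> e2 \<Rrightarrow> e2' \<Longrightarrow> App e1 e2 \<Rrightarrow> App e1' e2'"
| pbeta: "e \<Rrightarrow> e' \<Longrightarrow> is_value v \<Longrightarrow> v \<Rrightarrow> v' \<Longrightarrow> App (Lam t e) v \<Rrightarrow> subst0 e' v'"
| peq1: "App (Const (CEq b)) (Const c1) \<Rrightarrow> Const (CEq2 c1 b)"
| peq2: "App (Const (CEq2 c1 b)) (Const c2) \<Rrightarrow> Const (if c1 = c2 then CTrue else CFalse)"
| pbeq: "l \<Rrightarrow> l' \<Longrightarrow> r \<Rrightarrow> r' \<Longrightarrow> e \<Rrightarrow> e' \<Longrightarrow> BEq b l r e \<Rrightarrow> BEq b l' r' e'"
| pxeq: "tx \<Rrightarrow>\<^sub>t tx' \<Longrightarrow> t \<Rrightarrow>\<^sub>t t' \<Longrightarrow> l \<Rrightarrow> l' \<Longrightarrow> r \<Rrightarrow> r' \<Longrightarrow> e \<Rrightarrow> e'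
         \<Longrightarrow> XEq tx t l r e \<Rrightarrow> XEq tx' t' l' r' e'"
| prefn: "r \<Rrightarrow> r' \<Longrightarrow> TRefn b r \<Rrightarrow>\<^sub>t TRefn b r'"
| pfun: "tx \<Rrightarrow>\<^sub>t tx' \<Longrightarrow> t \<Rrightarrow>\<^sub>t t' \<Longrightarrow> TFun tx t \<Rrightarrow>\<^sub>t TFun tx' t'"
| ppeq: "t \<Rrightarrow>\<^sub>t t' \<Longrightarrow> l \<Rrightarrow> l' \<Longrightarrow> r \<Rrightarrow> r' \<Longrightarrow> TPEq t l r \<Rrightarrow>\<^sub>t TPEq t' l' r'"

inductive cong_e :: "expr \<Rightarrow> expr \<Rightarrow> bool" (infix "\<cong>" 50) where
  cvar: "Var x \<cong> Var x"
| cconst: "Const c \<cong> Const c"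
| clam: "t \<Rrightarrow>\<^sub>t t' \<Longrightarrow> e \<Rrightarrow> e' \<Longrightarrow> Lam t e \<cong> Lam t' e'"
| capp: "e1 \<Rrightarrow> e1' \<Longrightarrow> e2 \<Rrightarrow> e2' \<Longrightarrow> App e1 e2 \<cong> App e1' e2'"
| cbeq: "l \<Rrightarrow> l' \<Longrightarrow> r \<Rrightarrow> r' \<Longrightarrow> e \<Rrightarrow> e' \<Longrightarrow> BEq b l r e \<cong> BEq b l' r' e'"
| cxeq: "tx \<Rrightarrow>\<^sub>t tx' \<Longrightarrow> t \<Rrightarrow>\<^sub>t t' \<Longrightarrow> l \<Rrightarrow> l' \<Longrightarrow> r \<Rrightarrow> r' \<Longrightarrow> e \<Rrightarrow> e'
         \<Longrightarrow> XEq tx t l r e \<cong> XEq tx' t' l' r' e'"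

end

theory Submission
  imports Defs
begin

(* Every rule except the three contraction rules
   already yields a congruence, with no reduction step. For the two equality rules we
   contract the root redex. For a beta-redex (\<lambda>x. e) v \<Rrightarrow> e'[x:=v'] we first contract it
   to e[x:=v] and then replay, under the substitution, the reduction e \<longmapsto>\<^sup>* a with a \<cong> e'
   given by the induction hypothesis. Substitution preserves congruence because the
   substituted value v is itself congruent to v': parallel reduction of a value never
   contracts at the root. *)

lemma lift_lift:
  "i \<le> k \<Longrightarrow> lift_e (Suc k) (lift_e i e) = lift_e i (lift_e k e)"
  "i \<le> k \<Longrightarrow> lift_t (Suc k) (lift_t i t) = lift_t i (lift_t k t)"
  by (induction e and t arbitrary: i k and i k) auto

lemma lift_subst:
  "j \<le> i \<Longrightarrow> lift_e i (subst_e j s e) = subst_e j (lift_e i s) (lift_e (Suc i) e)"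
  "j \<le> i \<Longrightarrow> lift_t i (subst_t j s t) = subst_t j (lift_e i s) (lift_t (Suc i) t)"
  by (induction e and t arbitrary: i j s and i j s) (auto simp: lift_lift)

lemma lift_subst_lt:
  "i \<le> j \<Longrightarrow> lift_e i (subst_e j s e) = subst_e (Suc j) (lift_e i s) (lift_e i e)"
  "i \<le> j \<Longrightarrow> lift_t i (subst_t j s t) = subst_t (Suc j) (lift_e i s) (lift_t i t)"
  by (induction e and t arbitrary: i j s and i j s) (auto simp: lift_lift)

lemma subst_lift:
  "subst_e k s (lift_e k e) = e"
  "subst_t k s (lift_t k t) = t"
  by (induction e and t arbitrary: k s and k s) auto

lemma subst_subst:
  "i \<le> j \<Longrightarrow>
     subst_e i (subst_e j v u) (subst_e (Suc j) (lift_e i v) e) = subst_e j v (subst_e i u e)"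
  "i \<le> j \<Longrightarrow>
     subst_t i (subst_e j v u) (subst_t (Suc j) (lift_e i v) t) = subst_t j v (subst_t i u t)"
  by (induction e and t arbitrary: i j u v and i j u v)
     (auto simp: subst_lift lift_lift(1)[of 0, symmetric, simplified] lift_subst_lt)

lemma lift_subst0:
  "lift_e k (subst0 e u) = subst0 (lift_e (Suc k) e) (lift_e k u)"
  using lift_subst(1)[of 0 k u e] by simp

lemma subst_subst0:
  "subst_e k v (subst0 e u) = subst0 (subst_e (Suc k) (lift_e 0 v) e) (subst_e k v u)"
  using subst_subst(1)[of 0 k v u e] by simp

lemma is_value_lift: "is_value v \<Longrightarrow> is_value (lift_e k v)"
  by (induction v rule: is_value.induct) auto

lemma is_value_subst: "is_value v \<Longrightarrow> is_value (subst_e k w v)"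
  by (induction v rule: is_value.induct) auto

lemma par_lift:
  "e \<Rrightarrow> e' \<Longrightarrow> lift_e k e \<Rrightarrow> lift_e k e'"
  "t \<Rrightarrow>\<^sub>t t' \<Longrightarrow> lift_t k t \<Rrightarrow>\<^sub>t lift_t k t'"
proof (induction arbitrary: k and k rule: par_e_par_t.inducts)
  case (pbeta e e' v v' t)
  then show ?case by (auto simp: lift_subst0 intro!: par_e_par_t.pbeta is_value_lift)
next
  case (peq2 c1 b c2)
  then show ?case using par_e_par_t.peq2[of c1 b c2] by simp
qed (auto intro: par_e_par_t.intros)

lemma par_subst:
  "e \<Rrightarrow> e' \<Longrightarrow> v \<Rrightarrow> v' \<Longrightarrow> subst_e k v e \<Rrightarrow> subst_e k v' e'"
  "t \<Rrightarrow>\<^sub>t t' \<Longrightarrow> v \<Rrightarrow> v' \<Longrightarrow> subst_t k v t \<Rrightarrow>\<^sub>t subst_t k v' t'"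
proof (induction arbitrary: k v v' and k v v' rule: par_e_par_t.inducts)
  case (pbeta e e' u u' t)
  then show ?case
    by (auto simp: subst_subst0 intro!: par_e_par_t.pbeta is_value_subst par_lift)
next
  case (peq2 c1 b c2)
  then show ?case using par_e_par_t.peq2[of c1 b c2] by simp
qed (auto intro!: par_e_par_t.intros, (blast intro: par_lift)+)

lemma subst_preserves_step: "a \<longmapsto> b \<Longrightarrow> subst_e k v a \<longmapsto> subst_e k v b"
proof (induction arbitrary: k v rule: step.induct)
  case (beta u t e)
  then show ?case by (auto simp: subst_subst0 intro!: step.beta is_value_subst)
next
  case (eq2 c1 b c2)
  then show ?case using step.eq2[of c1 b c2] by simp
qed (auto intro: step.intros is_value_subst)

lemma subst_preserves_steps: "a \<longmapsto>\<^sup>* b \<Longrightarrow> subst_e k v a \<longmapsto>\<^sup>* subst_e k v b"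
  by (induction rule: rtranclp_induct)
     (auto intro: rtranclp.rtrancl_into_rtrancl subst_preserves_step)

lemma value_par_imp_cong: "is_value v \<Longrightarrow> v \<Rrightarrow> v' \<Longrightarrow> v \<cong> v'"
  by (induction v rule: is_value.induct) (auto elim: par_e.cases intro: cong_e.intros)

lemma cong_subst:
  "a \<cong> b \<Longrightarrow> is_value v \<Longrightarrow> v \<Rrightarrow> v' \<Longrightarrow> subst_e k v a \<cong> subst_e k v' b"
  by (induction rule: cong_e.induct)
     (auto intro: value_par_imp_cong intro!: cong_e.intros par_subst par_lift)

theorem lemmaC11:
  assumes "e1 \<Rrightarrow> e2"
  shows "\<exists>e1'. e1 \<longmapsto>\<^sup>* e1' \<and> e1' \<cong> e2"
  using assms
proof (induction rule: par_e_par_t.inducts(1)[where ?P2.0 = "\<lambda>_ _. True"])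
  case (pbeta e e' v v' t)
  then obtain a where "e \<longmapsto>\<^sup>* a" and "a \<cong> e'" by blast
  have "App (Lam t e) v \<longmapsto> subst0 e v" using \<open>is_value v\<close> by (rule step.beta)
  also have "subst0 e v \<longmapsto>\<^sup>* subst0 a v" using \<open>e \<longmapsto>\<^sup>* a\<close> by (rule subst_preserves_steps)
  finally have "App (Lam t e) v \<longmapsto>\<^sup>* subst0 a v" .
  moreover have "subst0 a v \<cong> subst0 e' v'" using \<open>a \<cong> e'\<close> pbeta by (blast intro: cong_subst)
  ultimately show ?case by blast
next
  case (peq1 b c1)
  show ?case by (blast intro: step.eq1 cong_e.intros)
next
  case (peq2 c1 b c2)
  show ?case by (blast intro: step.eq2 cong_e.intros)
qed (blast intro: cong_e.intros)+

end
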